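(* Let $G$ be an edge transitive graph with at least one edge, and let $\lambda$ and $\tau$ be the greatest and least eigenvalues of its adjacency matrix. Then \[\chi_{vec}(G)=\bar{\vartheta}(G)=1-\frac{\lambda}{\tau}.\]
   Context: Graphs are finite, simple and undirected. For a real $k>1$, a vector $k$-coloring of $G$ is a map $\varphi$ from $V(G)$ to the unit sphere of some $\mathbb{R}^d$ with $\varphi(u)^T\varphi(v)\le -\frac1{k-1}$ whenever $u\sim v$, and $\chi_{vec}(G)$ is the smallest such $k$. A strict vector $k$-coloring is such a map with $\varphi(u)^T\varphi(v)=-\frac1{k-1}$ whenever $u\sim v$, and $\bar{\vartheta}(G)$ is the smallest such $k$ (equivalently the Lovász theta function of the complement of $G$). *)

theory Defs
  imports "HOL-Analysis.Analysis"
begin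

text \<open>A finite simple graph: vertex type 'a (finite), adjacency relation E,
  assumed symmetric and irreflexive in the theorem.\<close>

definition graph_aut :: "('a \<Rightarrow> 'a \<Rightarrow> bool) \<Rightarrow> ('a \<Rightarrow> 'a) \<Rightarrow> bool" where
  "graph_aut E \<sigma> \<longleftrightarrow> bij \<sigma> \<and> (\<forall>u v. E u v \<longleftrightarrow> E (\<sigma> u) (\<sigma> v))"

definition edge_transitive :: "('a \<Rightarrow> 'a \<Rightarrow> bool) \<Rightarrow> bool" where
  "edge_transitive E \<longleftrightarrow>
     (\<forall>u v x y. E u v \<longrightarrow> E x y \<longrightarrow>
        (\<exists>\<sigma>. graph_aut E \<sigma> \<and> {\<sigma> u, \<sigma> v} = {x, y}))"

definition adj_matrix :: "('a::finite \<Rightarrow> 'a \<Rightarrow> bool) \<Rightarrow> real^'a^'a" where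
  "adj_matrix E = (\<chi> u v. if E u v then 1 else 0)"

definition adj_eigenvalues :: "('a::finite \<Rightarrow> 'a \<Rightarrow> bool) \<Rightarrow> real set" where
  "adj_eigenvalues E = {\<mu>. \<exists>x::real^'a. x \<noteq> 0 \<and> adj_matrix E *v x = \<mu> *\<^sub>R x}"

text \<open>Vectors of \<open>\<real>^d\<close> are represented as functions \<open>nat \<Rightarrow> real\<close>, of which only the
  coordinates \<open>0..<d\<close> are used.\<close>
definition vec_coloring ::
    "('a \<Rightarrow> 'a \<Rightarrow> bool) \<Rightarrow> real \<Rightarrow> nat \<Rightarrow> ('a \<Rightarrow> nat \<Rightarrow> real) \<Rightarrow> bool" where
  "vec_coloring E k d \<phi> \<longleftrightarrow>
     (\<forall>v. (\<Sum>i<d. (\<phi> v i)\<^sup>2) = 1) \<and>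
     (\<forall>u v. E u v \<longrightarrow> (\<Sum>i<d. \<phi> u i * \<phi> v i) \<le> - 1 / (k - 1))"

definition strict_vec_coloring ::
    "('a \<Rightarrow> 'a \<Rightarrow> bool) \<Rightarrow> real \<Rightarrow> nat \<Rightarrow> ('a \<Rightarrow> nat \<Rightarrow> real) \<Rightarrow> bool" where
  "strict_vec_coloring E k d \<phi> \<longleftrightarrow>
     (\<forall>v. (\<Sum>i<d. (\<phi> v i)\<^sup>2) = 1) \<and>
     (\<forall>u v. E u v \<longrightarrow> (\<Sum>i<d. \<phi> u i * \<phi> v i) = - 1 / (k - 1))"

definition chi_vec :: "('a \<Rightarrow> 'a \<Rightarrow> bool) \<Rightarrow> real" where
  "chi_vec E = Inf {k. k > 1 \<and> (\<exists>d \<phi>. vec_coloring E k d \<phi>)}"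

definition theta_bar :: "('a \<Rightarrow> 'a \<Rightarrow> bool) \<Rightarrow> real" where
  "theta_bar E = Inf {k. k > 1 \<and> (\<exists>d \<phi>. strict_vec_coloring E k d \<phi>)}"

end

theory Submission
  imports Defs
begin

text \<open>Lower bound (Hoffman's argument): let \<open>z \<ge> 0\<close> with \<open>z\<^sup>T A z \<ge> \<lambda> |z|\<^sup>2\<close> (the absolute
  value of a \<open>\<lambda>\<close>-eigenvector). Weighting the coordinates of the vectors of a vector
  \<open>k\<close>-colouring by \<open>z\<close> gives \<open>d\<close> functions whose adjacency forms sum to at most
  \<open>-\<lambda> |z|\<^sup>2 / (k - 1)\<close> and, by the Rayleigh principle, to at least \<open>\<tau> |z|\<^sup>2\<close>; hence
  \<open>k \<ge> 1 - \<lambda> / \<tau>\<close>.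

  Upper bound: if no automorphism reverses an edge, edge transitivity makes the graph bipartite,
  so there is a strict vector 2-colouring and \<open>-\<tau> \<le> \<lambda>\<close>, i.e. \<open>2 \<le> 1 - \<lambda> / \<tau>\<close>.
  Otherwise the automorphism group is transitive on edges and on non-isolated vertices, the graph
  is \<open>D\<close>-regular on its non-isolated part with \<open>D \<le> \<lambda>\<close>, and summing the Gram matrices of the
  automorphic images of a \<open>\<tau>\<close>-eigenvector produces a strict vector \<open>(1 - D / \<tau>)\<close>-colouring.\<close>

section \<open>The adjacency form and the Rayleigh principle\<close>

definition adj_op :: "('a::finite \<Rightarrow> 'a \<Rightarrow> bool) \<Rightarrow> ('a \<Rightarrow> real) \<Rightarrow> 'a \<Rightarrow> real" where
  "adj_op E f v = (\<Sum>u\<in>UNIV. if E v u then f u else 0)"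

definition adj_form :: "('a::finite \<Rightarrow> 'a \<Rightarrow> bool) \<Rightarrow> ('a \<Rightarrow> real) \<Rightarrow> real" where
  "adj_form E f = (\<Sum>v\<in>UNIV. \<Sum>u\<in>UNIV. if E v u then f v * f u else 0)"

definition sq_norm :: "('a::finite \<Rightarrow> real) \<Rightarrow> real" where
  "sq_norm f = (\<Sum>v\<in>UNIV. (f v)\<^sup>2)"

definition adj_eigenfun :: "('a::finite \<Rightarrow> 'a \<Rightarrow> bool) \<Rightarrow> real \<Rightarrow> ('a \<Rightarrow> real) \<Rightarrow> bool" where
  "adj_eigenfun E \<mu> f \<longleftrightarrow> (\<exists>v. f v \<noteq> 0) \<and> (\<forall>v. adj_op E f v = \<mu> * f v)"

lemma adj_matrix_mult_vec_nth: "(adj_matrix E *v x) $ v = adj_op E (($) x) v"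
  unfolding matrix_vector_mult_def adj_matrix_def adj_op_def by (auto intro!: sum.cong)

lemma adj_eigenvalues_iff: "\<mu> \<in> adj_eigenvalues E \<longleftrightarrow> (\<exists>f. adj_eigenfun E \<mu> f)"
proof
  assume "\<mu> \<in> adj_eigenvalues E"
  then obtain x :: "real^'a" where "x \<noteq> 0" "adj_matrix E *v x = \<mu> *\<^sub>R x"
    unfolding adj_eigenvalues_def by auto
  then have "adj_eigenfun E \<mu> (($) x)"
    unfolding adj_eigenfun_def by (auto simp: vec_eq_iff adj_matrix_mult_vec_nth)
  then show "\<exists>f. adj_eigenfun E \<mu> f" by blast
next
  assume "\<exists>f. adj_eigenfun E \<mu> f"
  then obtain f where f: "adj_eigenfun E \<mu> f" ..
  define x :: "real^'a" where "x = (\<chi> v. f v)"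
  have "(($) x) = f" by (simp add: x_def fun_eq_iff)
  then have "x \<noteq> 0 \<and> adj_matrix E *v x = \<mu> *\<^sub>R x"
    using f unfolding adj_eigenfun_def by (auto simp: vec_eq_iff adj_matrix_mult_vec_nth)
  then show "\<mu> \<in> adj_eigenvalues E" unfolding adj_eigenvalues_def by blast
qed

lemma adj_form_eq_sum_adj_op: "adj_form E f = (\<Sum>v\<in>UNIV. f v * adj_op E f v)"
  unfolding adj_form_def adj_op_def by (simp add: sum_distrib_left if_distrib cong: if_cong)

lemma adj_op_self_adjoint:
  assumes sym: "\<And>u v. E u v \<Longrightarrow> E v u"
  shows "(\<Sum>v\<in>UNIV. g v * adj_op E f v) = (\<Sum>v\<in>UNIV. f v * adj_op E g v)"
proof -
  have "(\<Sum>v\<in>UNIV. g v * adj_op E f v) = (\<Sum>v\<in>UNIV. \<Sum>u\<in>UNIV. if E v u then g v * f u else 0)"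
    unfolding adj_op_def by (simp add: sum_distrib_left if_distrib cong: if_cong)
  also have "\<dots> = (\<Sum>u\<in>UNIV. \<Sum>v\<in>UNIV. if E u v then f u * g v else 0)"
    by (subst sum.swap) (intro sum.cong refl, auto dest: sym)
  also have "\<dots> = (\<Sum>v\<in>UNIV. f v * adj_op E g v)"
    unfolding adj_op_def by (simp add: sum_distrib_left if_distrib cong: if_cong)
  finally show ?thesis .
qed

lemma adj_op_add_scaled: "adj_op E (\<lambda>v. f v + t * g v) w = adj_op E f w + t * adj_op E g w"
  unfolding adj_op_def sum_distrib_left sum.distrib[symmetric] by (auto intro!: sum.cong)

lemma adj_form_add_scaled:
  assumes sym: "\<And>u v. E u v \<Longrightarrow> E v u"
  shows "adj_form E (\<lambda>v. f v + t * g v)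
    = adj_form E f + 2 * t * (\<Sum>v\<in>UNIV. g v * adj_op E f v) + t\<^sup>2 * adj_form E g"
proof -
  have "adj_form E (\<lambda>v. f v + t * g v) = adj_form E f + t * (\<Sum>v\<in>UNIV. f v * adj_op E g v)
      + t * (\<Sum>v\<in>UNIV. g v * adj_op E f v) + t\<^sup>2 * adj_form E g"
    unfolding adj_form_eq_sum_adj_op adj_op_add_scaled
    by (simp add: sum.distrib sum_distrib_left algebra_simps power2_eq_square)
  then show ?thesis using adj_op_self_adjoint[of E g f, OF sym] by simp
qed

lemma sq_norm_add_scaled:
  "sq_norm (\<lambda>v. f v + t * g v) = sq_norm f + 2 * t * (\<Sum>v\<in>UNIV. g v * f v) + t\<^sup>2 * sq_norm g"
  unfolding sq_norm_def by (simp add: sum.distrib sum_distrib_left power2_eq_square algebra_simps)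

lemma adj_form_scale: "adj_form E (\<lambda>v. c * f v) = c\<^sup>2 * adj_form E f"
  unfolding adj_form_def
  by (simp add: sum_distrib_left power2_eq_square algebra_simps if_distrib cong: if_cong)

lemma sq_norm_nonneg: "0 \<le> sq_norm f"
  unfolding sq_norm_def by (simp add: sum_nonneg)

lemma sq_norm_pos_iff: "0 < sq_norm f \<longleftrightarrow> (\<exists>v. f v \<noteq> 0)"
  using sum_nonneg_eq_0_iff[of UNIV "\<lambda>v. (f v)\<^sup>2"] sq_norm_nonneg[of f]
  unfolding sq_norm_def by auto

lemma sq_norm_vec_nth: "sq_norm (($) x) = (norm x)\<^sup>2"
  unfolding sq_norm_def dot_square_norm[symmetric] inner_vec_def by (simp add: power2_eq_square)

lemma adj_form_eigen:
  assumes "\<forall>v. adj_op E f v = \<mu> * f v"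
  shows "adj_form E f = \<mu> * sq_norm f"
  unfolding adj_form_eq_sum_adj_op sq_norm_def using assms
  by (simp add: sum_distrib_left power2_eq_square algebra_simps)

lemma linear_coeff_zero_if_quadratic_nonneg:
  fixes a b :: real
  assumes nonneg: "\<And>t. 0 \<le> 2 * t * a + t\<^sup>2 * b"
  shows "a = 0"
proof (rule ccontr)
  assume "a \<noteq> 0"
  define c where "c = \<bar>b\<bar> + 1"
  have c: "c > 0" unfolding c_def by simp
  define t where "t = - a / c"
  have "t\<^sup>2 * b \<le> t\<^sup>2 * c" unfolding c_def by (intro mult_left_mono) auto
  moreover have "2 * t * a + t\<^sup>2 * c = - a\<^sup>2 / c"
    unfolding t_def using c by (simp add: field_simps power2_eq_square)
  moreover have "- a\<^sup>2 / c < 0" using c \<open>a \<noteq> 0\<close> by simp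
  ultimately show False using nonneg[of t] by linarith
qed

lemma adj_form_attains_min:
  fixes E :: "'a::finite \<Rightarrow> 'a \<Rightarrow> bool"
  shows "\<exists>f. sq_norm f = 1 \<and> (\<forall>g. adj_form E f * sq_norm g \<le> adj_form E g)"
proof -
  define F where "F = (\<lambda>x::real^'a. adj_form E (($) x))"
  have "continuous_on (sphere 0 1) (\<lambda>x::real^'a. if E v u then x $ v * x $ u else 0)" for v u
    by (cases "E v u") (auto intro!: continuous_intros)
  then have "continuous_on (sphere 0 1) F"
    unfolding F_def adj_form_def by (intro continuous_intros)
  moreover have "sphere (0::real^'a) 1 \<noteq> {}" by simp
  ultimately obtain x where x: "x \<in> sphere 0 1" and min: "\<And>y. y \<in> sphere 0 1 \<Longrightarrow> F x \<le> F y"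
    using continuous_attains_inf[OF compact_sphere] by blast
  have "F x * sq_norm g \<le> adj_form E g" for g
  proof (cases "\<exists>v. g v \<noteq> 0")
    case False
    then have "g = (\<lambda>_. 0)" by auto
    then show ?thesis by (simp add: sq_norm_def adj_form_def if_distrib cong: if_cong)
  next
    case True
    define y :: "real^'a" where "y = (\<chi> v. g v)"
    have g: "g = ($) y" by (simp add: y_def fun_eq_iff)
    then have "norm y > 0" using True sq_norm_pos_iff[of g] sq_norm_vec_nth[of y] by auto
    then have "F x \<le> F (y /\<^sub>R norm y)" by (intro min) simp
    also have "\<dots> = adj_form E (\<lambda>v. (1 / norm y) * g v)"
      unfolding F_def g by (rule arg_cong[where f = "adj_form E"]) (simp add: fun_eq_iff divide_inverse_commute)
    also have "\<dots> = (1 / norm y)\<^sup>2 * adj_form E g" by (rule adj_form_scale)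
    finally have "F x \<le> (1 / norm y)\<^sup>2 * adj_form E g" .
    with \<open>norm y > 0\<close> show ?thesis unfolding g sq_norm_vec_nth by (simp add: field_simps)
  qed
  moreover have "sq_norm (($) x) = 1" using x by (simp add: sq_norm_vec_nth)
  ultimately show ?thesis unfolding F_def by blast
qed

text \<open>A minimiser of the Rayleigh quotient is an eigenfunction: perturbing it by its residual
  \<open>r = A f - \<mu> f\<close> changes the shifted form \<open>adj_form - \<mu> sq_norm\<close> by \<open>2 t |r|\<^sup>2 + O(t\<^sup>2)\<close>.\<close>
lemma adj_form_minimizer_eigen:
  assumes sym: "\<And>u v. E u v \<Longrightarrow> E v u"
    and unit: "sq_norm f = 1"
    and min: "\<And>g. adj_form E f * sq_norm g \<le> adj_form E g"
  shows "adj_op E f v = adj_form E f * f v"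
proof -
  define \<mu> where "\<mu> = adj_form E f"
  define r where "r = (\<lambda>v. adj_op E f v - \<mu> * f v)"
  have r_sq: "(\<Sum>v\<in>UNIV. r v * adj_op E f v) - \<mu> * (\<Sum>v\<in>UNIV. r v * f v) = sq_norm r"
    unfolding sq_norm_def r_def
    by (simp add: sum_distrib_left sum_subtractf[symmetric] power2_eq_square algebra_simps)
  have "0 \<le> 2 * t * sq_norm r + t\<^sup>2 * (adj_form E r - \<mu> * sq_norm r)" for t
  proof -
    have "0 \<le> adj_form E (\<lambda>v. f v + t * r v) - \<mu> * sq_norm (\<lambda>v. f v + t * r v)"
      using min unfolding \<mu>_def by simp
    also have "\<dots> = adj_form E f + 2 * t * (\<Sum>v\<in>UNIV. r v * adj_op E f v) + t\<^sup>2 * adj_form E r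
        - \<mu> * (sq_norm f + 2 * t * (\<Sum>v\<in>UNIV. r v * f v) + t\<^sup>2 * sq_norm r)"
      by (simp only: adj_form_add_scaled[OF sym] sq_norm_add_scaled)
    also have "\<dots> = 2 * t * sq_norm r + t\<^sup>2 * (adj_form E r - \<mu> * sq_norm r)"
      unfolding r_sq[symmetric] using unit by (simp add: \<mu>_def algebra_simps)
    finally show ?thesis .
  qed
  then have "sq_norm r = 0" by (rule linear_coeff_zero_if_quadratic_nonneg)
  then show ?thesis using sq_norm_pos_iff[of r] sq_norm_nonneg[of r] by (simp add: r_def \<mu>_def)
qed

lemma adj_eigenfun_orthogonal:
  assumes sym: "\<And>u v. E u v \<Longrightarrow> E v u"
    and f: "adj_eigenfun E \<mu> f" and g: "adj_eigenfun E \<nu> g" and "\<mu> \<noteq> \<nu>"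
  shows "(\<Sum>v\<in>UNIV. f v * g v) = 0"
proof -
  have "(\<Sum>v\<in>UNIV. g v * adj_op E f v) = (\<Sum>v\<in>UNIV. f v * adj_op E g v)"
    by (rule adj_op_self_adjoint[OF sym])
  then have "\<mu> * (\<Sum>v\<in>UNIV. f v * g v) = \<nu> * (\<Sum>v\<in>UNIV. f v * g v)"
    using f g unfolding adj_eigenfun_def by (simp add: sum_distrib_left algebra_simps)
  then show ?thesis using \<open>\<mu> \<noteq> \<nu>\<close> by simp
qed

lemma adj_eigenvalues_finite:
  fixes E :: "'a::finite \<Rightarrow> 'a \<Rightarrow> bool"
  assumes sym: "\<And>u v. E u v \<Longrightarrow> E v u"
  shows "finite (adj_eigenvalues E)"
proof -
  define f where "f = (\<lambda>\<mu>. SOME f. adj_eigenfun E \<mu> f)"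
  have f: "adj_eigenfun E \<mu> (f \<mu>)" if "\<mu> \<in> adj_eigenvalues E" for \<mu>
    using that unfolding adj_eigenvalues_iff f_def by (rule someI_ex)
  define V where "V = (\<lambda>\<mu>. (\<chi> v. f \<mu> v) :: real^'a)"
  have V: "(($) (V \<mu>)) = f \<mu>" for \<mu> by (simp add: V_def fun_eq_iff)
  have "inj_on V (adj_eigenvalues E)"
  proof
    fix \<mu> \<nu> assume eig: "\<mu> \<in> adj_eigenvalues E" "\<nu> \<in> adj_eigenvalues E" and "V \<mu> = V \<nu>"
    then have "f \<mu> = f \<nu>" using V by metis
    then show "\<mu> = \<nu>" using f[OF eig(1)] f[OF eig(2)] unfolding adj_eigenfun_def by force
  qed
  moreover have "pairwise orthogonal (V ` adj_eigenvalues E)"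
    unfolding pairwise_def
  proof clarify
    fix \<mu> \<nu> assume eig: "\<mu> \<in> adj_eigenvalues E" "\<nu> \<in> adj_eigenvalues E" and "V \<mu> \<noteq> V \<nu>"
    then have "(\<Sum>v\<in>UNIV. f \<mu> v * f \<nu> v) = 0"
      using adj_eigenfun_orthogonal[OF sym f[OF eig(1)] f[OF eig(2)]] by auto
    then show "orthogonal (V \<mu>) (V \<nu>)"
      unfolding orthogonal_def inner_vec_def V_def by simp
  qed
  then have "finite (V ` adj_eigenvalues E)" by (rule pairwise_orthogonal_imp_finite)
  ultimately show ?thesis using finite_imageD by blast
qed

lemma Min_adj_eigenvalues:
  fixes E :: "'a::finite \<Rightarrow> 'a \<Rightarrow> bool"
  assumes sym: "\<And>u v. E u v \<Longrightarrow> E v u"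
  shows "Min (adj_eigenvalues E) \<in> adj_eigenvalues E"
    and "Min (adj_eigenvalues E) * sq_norm g \<le> adj_form E g"
proof -
  obtain f where unit: "sq_norm f = 1" and min: "\<And>g. adj_form E f * sq_norm g \<le> adj_form E g"
    using adj_form_attains_min by blast
  have "\<exists>v. f v \<noteq> 0" using unit sq_norm_pos_iff[of f] by simp
  then have "adj_eigenfun E (adj_form E f) f"
    unfolding adj_eigenfun_def using adj_form_minimizer_eigen[OF sym unit min] by blast
  then have eig: "adj_form E f \<in> adj_eigenvalues E" unfolding adj_eigenvalues_iff by blast
  have "adj_form E f \<le> \<nu>" if \<nu>: "\<nu> \<in> adj_eigenvalues E" for \<nu>
  proof -
    obtain h where h: "adj_eigenfun E \<nu> h" using \<nu> unfolding adj_eigenvalues_iff by blast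
    then have "adj_form E h = \<nu> * sq_norm h" and "sq_norm h > 0"
      using adj_form_eigen sq_norm_pos_iff unfolding adj_eigenfun_def by blast+
    with min[of h] show ?thesis by simp
  qed
  then have "Min (adj_eigenvalues E) = adj_form E f"
    using Min_eqI[OF adj_eigenvalues_finite[of E, OF sym]] eig by blast
  with eig min show "Min (adj_eigenvalues E) \<in> adj_eigenvalues E"
    and "Min (adj_eigenvalues E) * sq_norm g \<le> adj_form E g" by simp_all
qed

lemma Max_adj_eigenvalues:
  fixes E :: "'a::finite \<Rightarrow> 'a \<Rightarrow> bool"
  assumes sym: "\<And>u v. E u v \<Longrightarrow> E v u"
  shows "Max (adj_eigenvalues E) \<in> adj_eigenvalues E"
  using Max_in[OF adj_eigenvalues_finite[of E, OF sym]] Min_adj_eigenvalues(1)[of E, OF sym] by blast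

lemma sum_UNIV_supported_on_two:
  fixes h :: "'a::finite \<Rightarrow> 'b::comm_monoid_add"
  assumes "a \<noteq> b" and "\<And>w. w \<noteq> a \<Longrightarrow> w \<noteq> b \<Longrightarrow> h w = 0"
  shows "(\<Sum>w\<in>UNIV. h w) = h a + h b"
proof -
  have "(\<Sum>w\<in>UNIV. h w) = (\<Sum>w\<in>{a, b}. h w)"
    using assms(2) by (intro sum.mono_neutral_right) auto
  then show ?thesis using assms(1) by simp
qed

lemma Min_adj_eigenvalues_le_minus_one:
  fixes E :: "'a::finite \<Rightarrow> 'a \<Rightarrow> bool"
  assumes sym: "\<And>u v. E u v \<Longrightarrow> E v u"
    and irrefl: "\<And>v. \<not> E v v"
    and edge: "E a b"
  shows "Min (adj_eigenvalues E) \<le> -1"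
proof -
  have ab: "a \<noteq> b" using edge irrefl by blast
  define g where "g = (\<lambda>w. if w = a then 1 else if w = b then -1 else 0 :: real)"
  have g0: "g w = 0" if "w \<noteq> a" "w \<noteq> b" for w using that by (simp add: g_def)
  have "adj_op E g a = -1" "adj_op E g b = 1"
    unfolding adj_op_def using edge sym[OF edge] irrefl ab
    by (subst sum_UNIV_supported_on_two[OF ab]; simp add: g_def)+
  then have "adj_form E g = -2"
    unfolding adj_form_eq_sum_adj_op using ab g0
    by (subst sum_UNIV_supported_on_two[OF ab]) (simp_all add: g_def)
  moreover have "sq_norm g = 2"
    unfolding sq_norm_def using ab g0 by (subst sum_UNIV_supported_on_two[OF ab]) (simp_all add: g_def)
  ultimately show ?thesis using Min_adj_eigenvalues(2)[of E, OF sym, of g] by simp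
qed

section \<open>Hoffman's lower bound for vector colourings\<close>

lemma Max_adj_eigenvalues_nonneg_witness:
  fixes E :: "'a::finite \<Rightarrow> 'a \<Rightarrow> bool"
  assumes sym: "\<And>u v. E u v \<Longrightarrow> E v u"
  shows "\<exists>z. (\<forall>v. 0 \<le> z v) \<and> 0 < sq_norm z \<and> Max (adj_eigenvalues E) * sq_norm z \<le> adj_form E z"
proof -
  obtain x where x: "adj_eigenfun E (Max (adj_eigenvalues E)) x"
    using Max_adj_eigenvalues[of E, OF sym] unfolding adj_eigenvalues_iff by blast
  define z where "z = (\<lambda>v. \<bar>x v\<bar>)"
  have "sq_norm z = sq_norm x" unfolding sq_norm_def z_def by simp
  moreover have "adj_form E x \<le> adj_form E z" unfolding adj_form_def z_def
    by (intro sum_mono) (auto simp: abs_mult[symmetric])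
  moreover have "adj_form E x = Max (adj_eigenvalues E) * sq_norm x"
    using x adj_form_eigen unfolding adj_eigenfun_def by blast
  moreover have "0 < sq_norm x" using x sq_norm_pos_iff unfolding adj_eigenfun_def by blast
  ultimately show ?thesis by (intro exI[of _ z]) (auto simp: z_def)
qed

lemma sq_norm_scaled_columns:
  assumes "\<And>v. (\<Sum>i<d. (\<phi> v i)\<^sup>2) = 1"
  shows "(\<Sum>i<d. sq_norm (\<lambda>v. \<phi> v i * z v)) = sq_norm z"
proof -
  have "(\<Sum>i<d. sq_norm (\<lambda>v. \<phi> v i * z v)) = (\<Sum>v\<in>UNIV. (z v)\<^sup>2 * (\<Sum>i<d. (\<phi> v i)\<^sup>2))"
    unfolding sq_norm_def by (subst sum.swap) (simp add: sum_distrib_left power_mult_distrib mult.commute)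
  then show ?thesis unfolding sq_norm_def by (simp add: assms)
qed

lemma adj_form_scaled_columns_le:
  assumes col: "vec_coloring E k d \<phi>" and z: "\<And>v. 0 \<le> z v"
  shows "(\<Sum>i<d. adj_form E (\<lambda>v. \<phi> v i * z v)) \<le> - 1 / (k - 1) * adj_form E z"
proof -
  have "(\<Sum>i<d. adj_form E (\<lambda>v. \<phi> v i * z v))
      = (\<Sum>v\<in>UNIV. \<Sum>u\<in>UNIV. if E v u then z v * z u * (\<Sum>i<d. \<phi> v i * \<phi> u i) else 0)"
    unfolding adj_form_def
    by (subst sum.swap, rule sum.cong, simp, subst sum.swap)
       (auto intro!: sum.cong simp: sum_distrib_left algebra_simps)
  also have "\<dots> \<le> (\<Sum>v\<in>UNIV. \<Sum>u\<in>UNIV. if E v u then z v * z u * (- 1 / (k - 1)) else 0)"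
  proof (intro sum_mono)
    fix v u
    have "z v * z u * (\<Sum>i<d. \<phi> v i * \<phi> u i) \<le> z v * z u * (- 1 / (k - 1))" if "E v u"
      using col z that unfolding vec_coloring_def by (intro mult_left_mono) auto
    then show "(if E v u then z v * z u * (\<Sum>i<d. \<phi> v i * \<phi> u i) else 0)
        \<le> (if E v u then z v * z u * (- 1 / (k - 1)) else 0)" by simp
  qed
  also have "\<dots> = - 1 / (k - 1) * adj_form E z"
    unfolding adj_form_def by (simp add: sum_distrib_left if_distrib algebra_simps cong: if_cong)
  finally show ?thesis .
qed

lemma vec_coloring_ge:
  fixes E :: "'a::finite \<Rightarrow> 'a \<Rightarrow> bool"
  assumes sym: "\<And>u v. E u v \<Longrightarrow> E v u"
    and irrefl: "\<And>v. \<not> E v v"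
    and edge: "E a b"
    and col: "vec_coloring E k d \<phi>" and k: "1 < k"
  shows "1 - Max (adj_eigenvalues E) / Min (adj_eigenvalues E) \<le> k"
proof -
  define \<tau> where "\<tau> = Min (adj_eigenvalues E)"
  define \<rho> where "\<rho> = Max (adj_eigenvalues E)"
  obtain z where z: "\<And>v. 0 \<le> z v" "0 < sq_norm z" "\<rho> * sq_norm z \<le> adj_form E z"
    using Max_adj_eigenvalues_nonneg_witness[of E, OF sym] unfolding \<rho>_def by blast
  have unit: "\<And>v. (\<Sum>i<d. (\<phi> v i)\<^sup>2) = 1" using col unfolding vec_coloring_def by blast
  have "\<tau> * sq_norm z = (\<Sum>i<d. \<tau> * sq_norm (\<lambda>v. \<phi> v i * z v))"
    by (simp add: sum_distrib_left[symmetric] sq_norm_scaled_columns unit)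
  also have "\<dots> \<le> (\<Sum>i<d. adj_form E (\<lambda>v. \<phi> v i * z v))"
    unfolding \<tau>_def by (intro sum_mono Min_adj_eigenvalues(2)[of E, OF sym])
  also have "\<dots> \<le> - 1 / (k - 1) * adj_form E z"
    by (rule adj_form_scaled_columns_le[OF col z(1)])
  also have "\<dots> \<le> - 1 / (k - 1) * (\<rho> * sq_norm z)"
    using z(3) k by (intro mult_left_mono_neg) auto
  also have "\<dots> = - \<rho> / (k - 1) * sq_norm z" by simp
  finally have "\<tau> \<le> - \<rho> / (k - 1)" using z(2) by (rule mult_right_le_imp_le)
  moreover have "\<tau> \<le> -1" unfolding \<tau>_def by (rule Min_adj_eigenvalues_le_minus_one[of E, OF sym irrefl edge])
  ultimately show ?thesis using k unfolding \<tau>_def[symmetric] \<rho>_def[symmetric] by (simp add: field_simps)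
qed

section \<open>Automorphisms\<close>

lemma graph_aut_id: "graph_aut E id"
  unfolding graph_aut_def by simp

lemma graph_aut_comp: "graph_aut E \<sigma> \<Longrightarrow> graph_aut E \<rho> \<Longrightarrow> graph_aut E (\<sigma> \<circ> \<rho>)"
  unfolding graph_aut_def by (auto intro: bij_comp)

lemma graph_aut_inv:
  assumes "graph_aut E \<sigma>"
  shows "graph_aut E (inv \<sigma>)"
proof -
  have b: "bij \<sigma>" and e: "\<And>u v. E u v \<longleftrightarrow> E (\<sigma> u) (\<sigma> v)"
    using assms unfolding graph_aut_def by auto
  have "E u v \<longleftrightarrow> E (inv \<sigma> u) (inv \<sigma> v)" for u v
    using e[of "inv \<sigma> u" "inv \<sigma> v"] b by (simp add: bij_is_surj surj_f_inv_f)
  then show ?thesis unfolding graph_aut_def using b bij_imp_bij_inv by blast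
qed

lemma graph_aut_edge_iff: "graph_aut E \<sigma> \<Longrightarrow> E (\<sigma> u) (\<sigma> v) \<longleftrightarrow> E u v"
  unfolding graph_aut_def by simp

lemma bij_betw_comp_graph_aut:
  assumes \<rho>: "graph_aut E \<rho>"
  shows "bij_betw (\<lambda>\<sigma>. \<sigma> \<circ> \<rho>) {\<sigma>. graph_aut E \<sigma>} {\<sigma>. graph_aut E \<sigma>}"
proof (rule bij_betwI[where g = "\<lambda>\<sigma>. \<sigma> \<circ> inv \<rho>"])
  have b: "bij \<rho>" using \<rho> unfolding graph_aut_def by simp
  have inv_r: "\<rho> \<circ> inv \<rho> = id" using bij_is_surj[OF b] surj_iff by blast
  have inv_l: "inv \<rho> \<circ> \<rho> = id" using bij_is_inj[OF b] inj_iff by blast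
  show "\<sigma> \<circ> \<rho> \<circ> inv \<rho> = \<sigma>" and "\<sigma> \<circ> inv \<rho> \<circ> \<rho> = \<sigma>" for \<sigma>
    by (simp_all add: comp_assoc inv_r inv_l)
  show "(\<lambda>\<sigma>. \<sigma> \<circ> \<rho>) \<in> {\<sigma>. graph_aut E \<sigma>} \<rightarrow> {\<sigma>. graph_aut E \<sigma>}"
    using graph_aut_comp \<rho> by blast
  show "(\<lambda>\<sigma>. \<sigma> \<circ> inv \<rho>) \<in> {\<sigma>. graph_aut E \<sigma>} \<rightarrow> {\<sigma>. graph_aut E \<sigma>}"
    using graph_aut_comp graph_aut_inv[OF \<rho>] by blast
qed

lemma graph_aut_degree:
  assumes "graph_aut E \<sigma>"
  shows "card {u. E (\<sigma> v) u} = card {u. E v u}"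
proof -
  have "bij \<sigma>" using assms unfolding graph_aut_def by simp
  then have "card (\<sigma> -` {u. E (\<sigma> v) u}) = card {u. E (\<sigma> v) u}"
    by (intro card_vimage_inj) (auto simp: bij_is_inj bij_is_surj)
  moreover have "\<sigma> -` {u. E (\<sigma> v) u} = {u. E v u}" using graph_aut_edge_iff[OF assms] by auto
  ultimately show ?thesis by simp
qed

lemma edge_transitiveD:
  assumes "edge_transitive E" and "E u v" and "E a b"
  obtains \<sigma> where "graph_aut E \<sigma>" and "(\<sigma> u = a \<and> \<sigma> v = b) \<or> (\<sigma> u = b \<and> \<sigma> v = a)"
  using assms unfolding edge_transitive_def by (metis doubleton_eq_iff)

lemma edge_transitive_bipartite:
  assumes et: "edge_transitive E" and uv: "E u v"
    and not_flipped: "\<not> (\<exists>\<sigma>. graph_aut E \<sigma> \<and> \<sigma> u = v)"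
  shows "\<exists>S. \<forall>a b. E a b \<longrightarrow> (S a \<longleftrightarrow> \<not> S b)"
proof -
  define S where "S = (\<lambda>w. \<exists>\<sigma>. graph_aut E \<sigma> \<and> \<sigma> u = w)"
  have "\<not> S (\<sigma> v)" if \<sigma>: "graph_aut E \<sigma>" for \<sigma>
  proof
    assume "S (\<sigma> v)"
    then obtain \<rho> where "graph_aut E \<rho>" "\<rho> u = \<sigma> v" unfolding S_def by blast
    moreover have "inj \<sigma>" using \<sigma> unfolding graph_aut_def by (simp add: bij_is_inj)
    ultimately have "graph_aut E (inv \<sigma> \<circ> \<rho>)" and "(inv \<sigma> \<circ> \<rho>) u = v"
      using graph_aut_comp[OF graph_aut_inv[OF \<sigma>]] by auto
    with not_flipped show False by blast
  qed
  moreover have "S (\<sigma> u)" if "graph_aut E \<sigma>" for \<sigma> using that unfolding S_def by blast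
  ultimately have "S a \<longleftrightarrow> \<not> S b" if "E a b" for a b
    using edge_transitiveD[OF et uv that] by metis
  then show ?thesis by blast
qed

lemma bipartite_neg_adj_eigenvalue:
  assumes S: "\<And>a b. E a b \<Longrightarrow> S a \<longleftrightarrow> \<not> S b"
    and "\<mu> \<in> adj_eigenvalues E"
  shows "- \<mu> \<in> adj_eigenvalues E"
proof -
  obtain x where x: "adj_eigenfun E \<mu> x" using assms(2) unfolding adj_eigenvalues_iff by blast
  define y where "y = (\<lambda>w. if S w then x w else - x w)"
  have "adj_op E y v = (if S v then -1 else 1) * adj_op E x v" for v
    unfolding adj_op_def sum_distrib_left by (intro sum.cong) (auto simp: y_def dest: S)
  then have "adj_eigenfun E (- \<mu>) y" using x unfolding adj_eigenfun_def by (auto simp: y_def)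
  then show ?thesis unfolding adj_eigenvalues_iff by blast
qed

lemma arc_transitive_imp_transitive_on_nonisolated:
  assumes et: "edge_transitive E" and sym: "\<And>u v. E u v \<Longrightarrow> E v u"
    and flip: "\<And>u v. E u v \<Longrightarrow> \<exists>\<sigma>. graph_aut E \<sigma> \<and> \<sigma> u = v"
    and a: "E a a'" and b: "E b b'"
  shows "\<exists>\<sigma>. graph_aut E \<sigma> \<and> \<sigma> a = b"
proof -
  obtain \<sigma> where \<sigma>: "graph_aut E \<sigma>" and "\<sigma> a = b \<or> \<sigma> a = b'"
    using edge_transitiveD[OF et a b] by metis
  from this(2) show ?thesis
  proof
    assume "\<sigma> a = b'"
    obtain \<rho> where "graph_aut E \<rho>" "\<rho> b' = b" using flip[OF sym[OF b]] by blast
    with \<sigma> \<open>\<sigma> a = b'\<close> show ?thesis using graph_aut_comp by fastforce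
  qed (use \<sigma> in blast)
qed

section \<open>Strict vector colourings of edge-transitive graphs\<close>

lemma regular_degree_adj_eigenvalue:
  fixes E :: "'a::finite \<Rightarrow> 'a \<Rightarrow> bool"
  assumes sym: "\<And>u v. E u v \<Longrightarrow> E v u"
    and regular: "\<And>v. (\<exists>u. E v u) \<Longrightarrow> card {u. E v u} = D"
    and edge: "E a b"
  shows "real D \<in> adj_eigenvalues E"
proof -
  define f where "f = (\<lambda>v. if \<exists>u. E v u then 1 else 0 :: real)"
  have "adj_op E f v = D * f v" for v
  proof (cases "\<exists>u. E v u")
    case True
    have "adj_op E f v = (\<Sum>u\<in>UNIV. if E v u then 1 else 0)"
      unfolding adj_op_def f_def using sym by (intro sum.cong) auto
    also have "\<dots> = D" using regular[OF True] by (simp add: sum.If_cases)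
    finally show ?thesis using True by (simp add: f_def)
  qed (auto simp: adj_op_def f_def)
  moreover have "f a \<noteq> 0" using edge by (auto simp: f_def)
  ultimately show ?thesis unfolding adj_eigenvalues_iff adj_eigenfun_def by blast
qed

definition aut_gram :: "('a \<Rightarrow> 'a \<Rightarrow> bool) \<Rightarrow> ('a \<Rightarrow> real) \<Rightarrow> 'a \<Rightarrow> 'a \<Rightarrow> real" where
  "aut_gram E x a b = (\<Sum>\<sigma> | graph_aut E \<sigma>. x (\<sigma> a) * x (\<sigma> b))"

lemma aut_gram_commute: "aut_gram E x b a = aut_gram E x a b"
  unfolding aut_gram_def by (simp add: mult.commute)

lemma aut_gram_graph_aut:
  assumes "graph_aut E \<rho>"
  shows "aut_gram E x (\<rho> a) (\<rho> b) = aut_gram E x a b"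
  unfolding aut_gram_def
  using sum.reindex_bij_betw[OF bij_betw_comp_graph_aut[OF assms], of "\<lambda>\<sigma>. x (\<sigma> a) * x (\<sigma> b)"]
  by simp

lemma aut_gram_diag_eq_0:
  fixes E :: "'a::finite \<Rightarrow> 'a \<Rightarrow> bool"
  assumes "aut_gram E x v v = 0"
  shows "x v = 0"
proof -
  have "\<forall>\<sigma>\<in>{\<sigma>. graph_aut E \<sigma>}. x (\<sigma> v) * x (\<sigma> v) = 0"
    using assms sum_nonneg_eq_0_iff[of "{\<sigma>. graph_aut E \<sigma>}" "\<lambda>\<sigma>. x (\<sigma> v) * x (\<sigma> v)"]
    unfolding aut_gram_def by simp
  then show ?thesis using graph_aut_id[of E] by fastforce
qed

lemma adj_op_aut_gram:
  fixes E :: "'a::finite \<Rightarrow> 'a \<Rightarrow> bool"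
  assumes x: "\<And>v. adj_op E x v = \<mu> * x v"
  shows "adj_op E (\<lambda>u. aut_gram E x u v) v = \<mu> * aut_gram E x v v"
proof -
  have "adj_op E (\<lambda>u. x (\<sigma> u)) v = \<mu> * x (\<sigma> v)" if \<sigma>: "graph_aut E \<sigma>" for \<sigma>
  proof -
    have "bij \<sigma>" using \<sigma> unfolding graph_aut_def by simp
    have "adj_op E (\<lambda>u. x (\<sigma> u)) v = (\<Sum>u\<in>UNIV. (\<lambda>w. if E (\<sigma> v) w then x w else 0) (\<sigma> u))"
      unfolding adj_op_def using graph_aut_edge_iff[OF \<sigma>] by simp
    also have "\<dots> = adj_op E x (\<sigma> v)"
      unfolding adj_op_def using \<open>bij \<sigma>\<close> by (intro sum.reindex_bij_betw) (simp add: bij_betw_def)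
    finally show ?thesis using x by simp
  qed
  then have "(\<Sum>\<sigma> | graph_aut E \<sigma>. x (\<sigma> v) * adj_op E (\<lambda>u. x (\<sigma> u)) v)
      = \<mu> * aut_gram E x v v"
    unfolding aut_gram_def by (simp add: sum_distrib_left algebra_simps)
  moreover have "adj_op E (\<lambda>u. aut_gram E x u v) v
      = (\<Sum>\<sigma> | graph_aut E \<sigma>. x (\<sigma> v) * adj_op E (\<lambda>u. x (\<sigma> u)) v)"
    unfolding aut_gram_def adj_op_def sum_distrib_left
    by (subst sum.swap) (auto intro!: sum.cong simp: mult.commute)
  ultimately show ?thesis by simp
qed

lemma edge_transitive_aut_gram_edge:
  assumes "edge_transitive E" and "E a b" and "E u v"
  shows "aut_gram E x u v = aut_gram E x a b"
  using edge_transitiveD[OF assms] aut_gram_graph_aut aut_gram_commute by metis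

lemma degree_mult_aut_gram_edge:
  fixes E :: "'a::finite \<Rightarrow> 'a \<Rightarrow> bool"
  assumes sym: "\<And>u v. E u v \<Longrightarrow> E v u"
    and x: "\<And>v. adj_op E x v = \<mu> * x v"
    and edges: "\<And>u v. E u v \<Longrightarrow> aut_gram E x u v = c"
  shows "real (card {u. E a u}) * c = \<mu> * aut_gram E x a a"
proof -
  have "real (card {u. E a u}) * c = adj_op E (\<lambda>u. aut_gram E x u a) a"
    unfolding adj_op_def using edges sym by (simp add: sum.If_cases)
  also have "\<dots> = \<mu> * aut_gram E x a a" using adj_op_aut_gram x by blast
  finally show ?thesis .
qed

lemma strict_vec_coloring_of_gram:
  fixes y :: "'i \<Rightarrow> 'a \<Rightarrow> real"
  assumes I: "finite I" "I \<noteq> {}"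
    and sym: "\<And>u v. E u v \<Longrightarrow> E v u"
    and s: "0 < s" and c: "c < 0"
    and diag: "\<And>v. (\<exists>u. E v u) \<Longrightarrow> (\<Sum>i\<in>I. (y i v)\<^sup>2) = s"
    and edge: "\<And>a b. E a b \<Longrightarrow> (\<Sum>i\<in>I. y i a * y i b) = c"
  shows "\<exists>d \<phi>. strict_vec_coloring E (1 - s / c) d \<phi>"
proof -
  obtain g where g: "bij_betw g {..<card I} I"
    using ex_bij_betw_nat_finite[OF I(1)] unfolding atLeast0LessThan by blast
  have reindex: "(\<Sum>n<card I. h (g n)) = (\<Sum>i\<in>I. h i)" for h :: "'i \<Rightarrow> real"
    by (rule sum.reindex_bij_betw[OF g])
  define \<phi> where "\<phi> = (\<lambda>v n. if \<exists>u. E v u then y (g n) v / sqrt s else if n = 0 then 1 else 0)"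
  have "strict_vec_coloring E (1 - s / c) (card I) \<phi>"
    unfolding strict_vec_coloring_def
  proof (intro conjI allI impI)
    fix v
    show "(\<Sum>n<card I. (\<phi> v n)\<^sup>2) = 1"
    proof (cases "\<exists>u. E v u")
      case True
      then have "(\<Sum>n<card I. (\<phi> v n)\<^sup>2) = (\<Sum>i\<in>I. (y i v)\<^sup>2) / s"
        unfolding \<phi>_def reindex[of "\<lambda>i. (y i v)\<^sup>2", symmetric] using s
        by (simp add: sum_divide_distrib power_divide)
      then show ?thesis using diag[OF True] s by simp
    next
      case False
      then have "\<phi> v = (\<lambda>n. if n = 0 then 1 else 0)" by (simp only: \<phi>_def if_not_P if_False)
      then have sq: "(\<lambda>n. (\<phi> v n)\<^sup>2) = (\<lambda>n. if n = 0 then 1 else 0)" by auto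
      have "card I > 0" using I by (simp add: card_gt_0_iff)
      then show ?thesis unfolding sq by (simp add: sum.delta')
    qed
  next
    fix a b assume ab: "E a b"
    then have "\<exists>u. E a u" "\<exists>u. E b u" using sym by blast+
    then have "(\<Sum>n<card I. \<phi> a n * \<phi> b n) = (\<Sum>i\<in>I. y i a * y i b) / s"
      unfolding \<phi>_def reindex[of "\<lambda>i. y i a * y i b", symmetric] using s
      by (simp add: sum_divide_distrib real_sqrt_mult[symmetric])
    also have "\<dots> = - 1 / ((1 - s / c) - 1)" using edge[OF ab] s c by (simp add: field_simps)
    finally show "(\<Sum>n<card I. \<phi> a n * \<phi> b n) = - 1 / ((1 - s / c) - 1)" .
  qed
  then show ?thesis by blast
qed

lemma aut_gram_diag_pos:
  fixes E :: "'a::finite \<Rightarrow> 'a \<Rightarrow> bool"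
  assumes trans: "\<And>v w. (\<exists>u. E v u) \<Longrightarrow> (\<exists>u. E w u) \<Longrightarrow> \<exists>\<sigma>. graph_aut E \<sigma> \<and> \<sigma> v = w"
    and x: "adj_eigenfun E \<mu> x" and "\<mu> \<noteq> 0" and edge: "E a b"
  shows "0 < aut_gram E x a a"
proof (rule ccontr)
  assume "\<not> 0 < aut_gram E x a a"
  moreover have "0 \<le> aut_gram E x a a" unfolding aut_gram_def by (simp add: sum_nonneg)
  ultimately have zero: "aut_gram E x a a = 0" by simp
  have "x v = 0" for v
  proof (cases "\<exists>u. E v u")
    case True
    then obtain \<sigma> where "graph_aut E \<sigma>" "\<sigma> a = v" using trans edge by blast
    then have "aut_gram E x v v = 0" using zero aut_gram_graph_aut by metis
    then show ?thesis by (rule aut_gram_diag_eq_0)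
  next
    case False
    then have "adj_op E x v = 0" unfolding adj_op_def by simp
    then show ?thesis using x \<open>\<mu> \<noteq> 0\<close> unfolding adj_eigenfun_def by simp
  qed
  then show False using x unfolding adj_eigenfun_def by blast
qed

lemma arc_transitive_strict_vec_coloring:
  fixes E :: "'a::finite \<Rightarrow> 'a \<Rightarrow> bool"
  assumes sym: "\<And>u v. E u v \<Longrightarrow> E v u" and irrefl: "\<And>v. \<not> E v v"
    and et: "edge_transitive E" and edge: "E a b"
    and flip: "\<And>u v. E u v \<Longrightarrow> \<exists>\<sigma>. graph_aut E \<sigma> \<and> \<sigma> u = v"
  shows "\<exists>K d \<phi>. strict_vec_coloring E K d \<phi> \<and> 1 < K \<and>
           K \<le> 1 - Max (adj_eigenvalues E) / Min (adj_eigenvalues E)"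
proof -
  define \<tau> where "\<tau> = Min (adj_eigenvalues E)"
  define \<rho> where "\<rho> = Max (adj_eigenvalues E)"
  have \<tau>: "\<tau> \<le> -1" unfolding \<tau>_def by (rule Min_adj_eigenvalues_le_minus_one[of E, OF sym irrefl edge])
  obtain x where x: "adj_eigenfun E \<tau> x"
    using Min_adj_eigenvalues(1)[of E, OF sym] unfolding \<tau>_def adj_eigenvalues_iff by blast
  have trans: "\<exists>\<sigma>. graph_aut E \<sigma> \<and> \<sigma> v = w" if "\<exists>u. E v u" "\<exists>u. E w u" for v w
    using that arc_transitive_imp_transitive_on_nonisolated[OF et sym flip] by blast
  define X where "X = aut_gram E x"
  define s where "s = X a a"
  define c where "c = X a b"
  define D where "D = card {u. E a u}"
  have diag: "X v v = s" if "\<exists>u. E v u" for v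
    using trans[OF _ that] edge aut_gram_graph_aut unfolding X_def s_def by metis
  have edges: "X u v = c" if "E u v" for u v
    using edge_transitive_aut_gram_edge[OF et edge that] unfolding X_def c_def .
  have regular: "card {u. E v u} = D" if "\<exists>u. E v u" for v
    using trans[OF _ that] edge graph_aut_degree unfolding D_def by metis
  have Dc: "D * c = \<tau> * s"
    using degree_mult_aut_gram_edge[of E x \<tau> c a, OF sym] x edges
    unfolding X_def s_def D_def adj_eigenfun_def by blast
  have s: "0 < s" unfolding s_def X_def using aut_gram_diag_pos[OF trans x _ edge] \<tau> by simp
  have D: "1 \<le> real D" using edge unfolding D_def by (simp add: Suc_le_eq card_gt_0_iff) blast
  have "real D \<le> \<rho>" unfolding \<rho>_def
    using regular_degree_adj_eigenvalue[of E, OF sym regular edge] adj_eigenvalues_finite[of E, OF sym]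
    by simp
  moreover have "c < 0"
  proof -
    have "real D * c < 0" using Dc s \<tau> by (simp add: mult_neg_pos)
    then show ?thesis using D by (simp add: mult_less_0_iff)
  qed
  moreover have "s / c = D / \<tau>" using Dc \<open>c < 0\<close> \<tau> by (simp add: field_simps)
  moreover have "\<exists>d \<phi>. strict_vec_coloring E (1 - s / c) d \<phi>"
  proof (rule strict_vec_coloring_of_gram[OF _ _ sym s \<open>c < 0\<close>])
    show "finite {\<sigma>. graph_aut E \<sigma>}" and "{\<sigma>. graph_aut E \<sigma>} \<noteq> {}"
      using graph_aut_id by auto
    show "(\<Sum>\<sigma>\<in>{\<sigma>. graph_aut E \<sigma>}. (x (\<sigma> v))\<^sup>2) = s" if "\<exists>u. E v u" for v
      using diag[OF that] unfolding X_def aut_gram_def by (simp add: power2_eq_square)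
    show "(\<Sum>\<sigma>\<in>{\<sigma>. graph_aut E \<sigma>}. x (\<sigma> u) * x (\<sigma> v)) = c" if "E u v" for u v
      using edges[OF that] unfolding X_def aut_gram_def by simp
  qed
  ultimately show ?thesis
    using s \<tau> unfolding \<tau>_def[symmetric] \<rho>_def[symmetric]
    by (intro exI[of _ "1 - s / c"]) (auto simp: field_simps)
qed

lemma not_arc_transitive_strict_vec_coloring:
  fixes E :: "'a::finite \<Rightarrow> 'a \<Rightarrow> bool"
  assumes sym: "\<And>u v. E u v \<Longrightarrow> E v u" and irrefl: "\<And>v. \<not> E v v"
    and et: "edge_transitive E" and edge: "E a b"
    and not_flipped: "\<not> (\<exists>\<sigma>. graph_aut E \<sigma> \<and> \<sigma> a = b)"
  shows "\<exists>K d \<phi>. strict_vec_coloring E K d \<phi> \<and> 1 < K \<and>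
           K \<le> 1 - Max (adj_eigenvalues E) / Min (adj_eigenvalues E)"
proof -
  obtain S where S: "\<And>u v. E u v \<Longrightarrow> S u \<longleftrightarrow> \<not> S v"
    using edge_transitive_bipartite[OF et edge not_flipped] by blast
  have "strict_vec_coloring E 2 1 (\<lambda>w _. if S w then 1 else -1)"
    unfolding strict_vec_coloring_def using S by auto
  moreover have "- Min (adj_eigenvalues E) \<le> Max (adj_eigenvalues E)"
    using bipartite_neg_adj_eigenvalue[OF S Min_adj_eigenvalues(1)[of E, OF sym]]
      adj_eigenvalues_finite[of E, OF sym] by simp
  moreover have "Min (adj_eigenvalues E) \<le> -1" by (rule Min_adj_eigenvalues_le_minus_one[of E, OF sym irrefl edge])
  ultimately show ?thesis by (intro exI[of _ 2] exI[of _ 1]) (auto simp: field_simps)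
qed

lemma edge_transitive_strict_vec_coloring:
  fixes E :: "'a::finite \<Rightarrow> 'a \<Rightarrow> bool"
  assumes sym: "\<And>u v. E u v \<Longrightarrow> E v u" and irrefl: "\<And>v. \<not> E v v"
    and et: "edge_transitive E" and edge: "E a b"
  shows "\<exists>K d \<phi>. strict_vec_coloring E K d \<phi> \<and> 1 < K \<and>
           K \<le> 1 - Max (adj_eigenvalues E) / Min (adj_eigenvalues E)"
proof (cases "\<forall>u v. E u v \<longrightarrow> (\<exists>\<sigma>. graph_aut E \<sigma> \<and> \<sigma> u = v)")
  case True
  then show ?thesis using arc_transitive_strict_vec_coloring[of E, OF sym irrefl et edge] by blast
next
  case False
  then obtain u v where "E u v" and "\<not> (\<exists>\<sigma>. graph_aut E \<sigma> \<and> \<sigma> u = v)" by blast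
  then show ?thesis using not_arc_transitive_strict_vec_coloring[of E, OF sym irrefl et] by blast
qed

lemma strict_vec_coloring_imp_vec_coloring:
  "strict_vec_coloring E k d \<phi> \<Longrightarrow> vec_coloring E k d \<phi>"
  unfolding strict_vec_coloring_def vec_coloring_def by simp

theorem corollary5p3:
  fixes E :: "'a::finite \<Rightarrow> 'a \<Rightarrow> bool"
  assumes sym: "\<And>u v. E u v \<Longrightarrow> E v u"
    and irrefl: "\<And>v. \<not> E v v"
    and et: "edge_transitive E"
    and edge: "\<exists>u v. E u v"
  shows "chi_vec E = theta_bar E \<and>
         theta_bar E = 1 - Max (adj_eigenvalues E) / Min (adj_eigenvalues E)"
proof -
  define K where "K = 1 - Max (adj_eigenvalues E) / Min (adj_eigenvalues E)"
  obtain a b where ab: "E a b" using edge by blast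
  obtain K' d \<phi> where col: "strict_vec_coloring E K' d \<phi>" and "1 < K'" "K' \<le> K"
    using edge_transitive_strict_vec_coloring[of E, OF sym irrefl et ab] unfolding K_def by blast
  have lower: "K \<le> k" if "vec_coloring E k d' \<psi>" "1 < k" for k d' \<psi>
    using vec_coloring_ge[of E, OF sym irrefl ab that] unfolding K_def .
  have "K' = K"
    using lower[OF strict_vec_coloring_imp_vec_coloring[OF col] \<open>1 < K'\<close>] \<open>K' \<le> K\<close> by simp
  note facts = col \<open>1 < K'\<close> this lower strict_vec_coloring_imp_vec_coloring
  have "chi_vec E = K" unfolding chi_vec_def by (rule cInf_eq_minimum) (use facts in blast)+
  moreover have "theta_bar E = K" unfolding theta_bar_def by (rule cInf_eq_minimum) (use facts in blast)+
  ultimately show ?thesis unfolding K_def by simp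
qed

end
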